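(* Let $L|K$ be a field extension and assume that $L$ admits a $K$-rational place $\xi$. Then the map $\iota:M(K)\to M(L)$, $\zeta\mapsto\zeta\circ\xi$, is a continuous injective map compatible with restriction.
   Context: A $K$-rational place of $L$ is a place of $L$ which is the identity on $K$ and whose image is $K\cup\{\infty\}$. For a field $K$, $M(K)$ is the set of $\mathbb R$-places $K\to\mathbb R\cup\{\infty\}$, with topology generated by the subbasis $H'(b)=\{\zeta\in M(K)\mid \infty\ne\zeta(b)>0\}$, $b\in K$. A map $\iota:M(K)\to M(L)$ is compatible with restriction if $\iota(\zeta)|_K=\zeta$ for all $\zeta\in M(K)$. *)

theory Defs
  imports "HOL-Analysis.Analysis"
begin

definition is_subfield :: "'a::field set \<Rightarrow> bool" where
  "is_subfield K \<longleftrightarrow> 0 \<in> K \<and> 1 \<in> K \<and>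
     (\<forall>x\<in>K. \<forall>y\<in>K. x + y \<in> K \<and> x * y \<in> K) \<and>
     (\<forall>x\<in>K. - x \<in> K \<and> inverse x \<in> K)"

text \<open>The value infinity is represented by None, a finite value y by Some y.
  A place of the field A into the field B is a map phi on A with values in B \<union> {\<infinity>}
  whose finiteness ring O = {x. phi x \<noteq> \<infinity>} is a subring on which phi is a ring
  homomorphism, and such that for x \<noteq> 0: phi x = \<infinity> iff phi (x^-1) = 0
  (so O is a valuation ring and the kernel of phi on O is its maximal ideal).\<close>
definition is_place :: "'a::field set \<Rightarrow> 'b::field set \<Rightarrow> ('a \<Rightarrow> 'b option) \<Rightarrow> bool" where
  "is_place A B \<phi> \<longleftrightarrow>
     (\<forall>x. x \<notin> A \<longrightarrow> \<phi> x = None) \<and>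
     (\<forall>x\<in>A. \<forall>y. \<phi> x = Some y \<longrightarrow> y \<in> B) \<and>
     \<phi> 1 = Some 1 \<and>
     (\<forall>x\<in>A. \<forall>y\<in>A. \<forall>a b. \<phi> x = Some a \<and> \<phi> y = Some b \<longrightarrow>
         \<phi> (x + y) = Some (a + b) \<and> \<phi> (x * y) = Some (a * b)) \<and>
     (\<forall>x\<in>A. x \<noteq> 0 \<longrightarrow> (\<phi> x = None \<longleftrightarrow> \<phi> (inverse x) = Some 0))"

definition K_rational_place :: "'a::field set \<Rightarrow> 'a set \<Rightarrow> ('a \<Rightarrow> 'a option) \<Rightarrow> bool" where
  "K_rational_place K L \<xi> \<longleftrightarrow> is_place L K \<xi> \<and> (\<forall>x\<in>K. \<xi> x = Some x)"

definition Mspace :: "'a::field set \<Rightarrow> ('a \<Rightarrow> real option) set" where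
  "Mspace K = {\<zeta>. is_place K (UNIV::real set) \<zeta>}"

definition Hsub :: "'a::field set \<Rightarrow> 'a \<Rightarrow> ('a \<Rightarrow> real option) set" where
  "Hsub K b = {\<zeta>\<in>Mspace K. \<exists>r. \<zeta> b = Some r \<and> r > 0}"

definition Mtop :: "'a::field set \<Rightarrow> ('a \<Rightarrow> real option) topology" where
  "Mtop K = subtopology (topology_generated_by {Hsub K b | b. b \<in> K}) (Mspace K)"

definition place_comp :: "('b \<Rightarrow> 'c option) \<Rightarrow> ('a \<Rightarrow> 'b option) \<Rightarrow> 'a \<Rightarrow> 'c option" where
  "place_comp \<zeta> \<xi> x = (case \<xi> x of None \<Rightarrow> None | Some y \<Rightarrow> \<zeta> y)"

definition place_restrict :: "'a set \<Rightarrow> ('a \<Rightarrow> 'c option) \<Rightarrow> 'a \<Rightarrow> 'c option" where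
  "place_restrict K \<zeta> x = (if x \<in> K then \<zeta> x else None)"

end

theory Submission
  imports Defs
begin

text \<open>A real place \<open>\<zeta>\<close> of \<open>K\<close> pulls back along \<open>\<xi>\<close> to the real place \<open>\<zeta> \<circ> \<xi>\<close> of \<open>L\<close>, since a
  composite of places is a place. As \<open>\<xi>\<close> is the identity on \<open>K\<close>, restricting \<open>\<zeta> \<circ> \<xi>\<close> to \<open>K\<close>
  gives back \<open>\<zeta>\<close>, which yields injectivity. For continuity, the preimage of a subbasic set
  \<open>H'(b)\<close> of \<open>M(L)\<close> is \<open>H'(\<xi> b)\<close> if \<open>\<xi> b\<close> is finite and empty otherwise.\<close>

lemma is_placeD:
  assumes "is_place A B \<phi>"
  shows is_place_out: "\<And>x. x \<notin> A \<Longrightarrow> \<phi> x = None"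
    and is_place_val: "\<And>x y. x \<in> A \<Longrightarrow> \<phi> x = Some y \<Longrightarrow> y \<in> B"
    and is_place_one: "\<phi> 1 = Some 1"
    and is_place_add: "\<And>x y a b. x \<in> A \<Longrightarrow> y \<in> A \<Longrightarrow> \<phi> x = Some a \<Longrightarrow> \<phi> y = Some b \<Longrightarrow>
           \<phi> (x + y) = Some (a + b)"
    and is_place_mult: "\<And>x y a b. x \<in> A \<Longrightarrow> y \<in> A \<Longrightarrow> \<phi> x = Some a \<Longrightarrow> \<phi> y = Some b \<Longrightarrow>
           \<phi> (x * y) = Some (a * b)"
    and is_place_inv: "\<And>x. x \<in> A \<Longrightarrow> x \<noteq> 0 \<Longrightarrow> \<phi> x = None \<longleftrightarrow> \<phi> (inverse x) = Some 0"
  using assms unfolding is_place_def by simp_all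

lemma subfieldD:
  assumes "is_subfield A"
  shows subfield_zero: "0 \<in> A" and subfield_one: "1 \<in> A"
    and subfield_uminus: "\<And>x. x \<in> A \<Longrightarrow> - x \<in> A"
    and subfield_inverse: "\<And>x. x \<in> A \<Longrightarrow> inverse x \<in> A"
  using assms unfolding is_subfield_def by simp_all

lemma place_zero:
  assumes A: "is_subfield A" and P: "is_place A B \<phi>"
  shows "\<phi> 0 = Some 0"
proof -
  have m1: "- 1 \<in> A" using subfield_uminus[OF A subfield_one[OF A]] .
  \<comment> \<open>\<open>-1\<close> is its own inverse, so \<open>\<phi> (-1)\<close> cannot be \<open>\<infinity>\<close>.\<close>
  obtain a where a: "\<phi> (- 1) = Some a"
    using is_place_inv[OF P m1] by (cases "\<phi> (- 1)") auto
  have z: "\<phi> 0 = Some (1 + a)"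
    using is_place_add[OF P subfield_one[OF A] m1 is_place_one[OF P] a] by simp
  have "\<phi> (0 + 0) = Some ((1 + a) + (1 + a))"
    using is_place_add[OF P subfield_zero[OF A] subfield_zero[OF A] z z] .
  with z have "1 + a = (1 + a) + (1 + a)" by simp
  then have "1 + a = 0" by (simp only: add_cancel_right_right)
  with z show ?thesis by (simp only:)
qed

lemma place_inverse_nonzero:
  assumes A: "is_subfield A" and P: "is_place A B \<phi>"
    and x: "x \<in> A" "\<phi> x = Some c" and c: "c \<noteq> 0"
  shows "\<phi> (inverse x) = Some (inverse c)"
proof -
  have x0: "x \<noteq> 0" using place_zero[OF A P] x c by auto
  have ix: "inverse x \<in> A" "inverse x \<noteq> 0" using subfield_inverse[OF A x(1)] x0 by auto
  obtain d where d: "\<phi> (inverse x) = Some d"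
    using is_place_inv[OF P ix] x c by (cases "\<phi> (inverse x)") auto
  have "\<phi> (x * inverse x) = Some (c * d)" using is_place_mult[OF P x(1) ix(1) x(2) d] .
  with x0 is_place_one[OF P] have "c * d = 1" by simp
  then have "inverse c = d" by (rule inverse_unique)
  with d show ?thesis by simp
qed

lemma place_inverse_zero:
  assumes A: "is_subfield A" and P: "is_place A B \<phi>"
    and x: "x \<in> A" "x \<noteq> 0" "\<phi> x = Some 0"
  shows "\<phi> (inverse x) = None"
  using is_place_inv[OF P subfield_inverse[OF A x(1)]] x by simp

lemma is_place_place_comp:
  assumes A: "is_subfield A" and B: "is_subfield B"
    and PX: "is_place A B \<xi>" and PZ: "is_place B C \<zeta>"
  shows "is_place A C (place_comp \<zeta> \<xi>)"
proof -
  let ?p = "place_comp \<zeta> \<xi>"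
  have hom: "?p (x + y) = Some (a + b) \<and> ?p (x * y) = Some (a * b)"
    if xy: "x \<in> A" "y \<in> A" and p: "?p x = Some a" "?p y = Some b" for x y a b
  proof -
    obtain c d where c: "\<xi> x = Some c" "\<zeta> c = Some a" and d: "\<xi> y = Some d" "\<zeta> d = Some b"
      using p by (auto simp: place_comp_def split: option.splits)
    have cd: "c \<in> B" "d \<in> B" using is_place_val[OF PX] xy c d by auto
    show ?thesis
      using is_place_add[OF PX xy c(1) d(1)] is_place_mult[OF PX xy c(1) d(1)]
        is_place_add[OF PZ cd c(2) d(2)] is_place_mult[OF PZ cd c(2) d(2)]
      by (simp add: place_comp_def)
  qed
  have inv: "?p x = None \<longleftrightarrow> ?p (inverse x) = Some 0" if x: "x \<in> A" "x \<noteq> 0" for x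
  proof (cases "\<xi> x")
    case None
    then show ?thesis
      using is_place_inv[OF PX x] place_zero[OF B PZ] by (simp add: place_comp_def)
  next
    case (Some c)
    have cB: "c \<in> B" using is_place_val[OF PX x(1) Some] .
    show ?thesis
    proof (cases "c = 0")
      case True
      then show ?thesis
        using place_inverse_zero[OF A PX x] Some place_zero[OF B PZ] by (simp add: place_comp_def)
    next
      case False
      then show ?thesis
        using place_inverse_nonzero[OF A PX x(1) Some False] Some is_place_inv[OF PZ cB False]
        by (simp add: place_comp_def)
    qed
  qed
  have val: "y \<in> C" if "x \<in> A" "?p x = Some y" for x y
    using that is_place_val[OF PX] is_place_val[OF PZ]
    by (auto simp: place_comp_def split: option.splits)
  have out: "?p x = None" if "x \<notin> A" for x
    using is_place_out[OF PX that] by (simp add: place_comp_def)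
  have one: "?p 1 = Some 1"
    using is_place_one[OF PX] is_place_one[OF PZ] by (simp add: place_comp_def)
  show ?thesis
    unfolding is_place_def using out one val hom inv by blast
qed

lemma place_restrict_place_comp_rational:
  assumes X: "K_rational_place K L \<xi>" and Z: "is_place K B \<zeta>"
  shows "place_restrict K (place_comp \<zeta> \<xi>) = \<zeta>"
  using X is_place_out[OF Z]
  by (auto simp: fun_eq_iff place_restrict_def place_comp_def K_rational_place_def)

lemma Hsub_one: "Hsub A 1 = Mspace A"
  unfolding Hsub_def Mspace_def using is_place_one by fastforce

lemma Union_Hsub:
  assumes "is_subfield A"
  shows "\<Union>{Hsub A b | b. b \<in> A} = Mspace A"
proof
  show "Mspace A \<subseteq> \<Union>{Hsub A b | b. b \<in> A}"
    using Hsub_one subfield_one[OF assms] by blast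
qed (auto simp: Hsub_def)

lemma topspace_Mtop:
  assumes "is_subfield A"
  shows "topspace (Mtop A) = Mspace A"
  unfolding Mtop_def using Union_Hsub[OF assms] by simp

lemma openin_Mtop_Hsub:
  assumes "b \<in> A"
  shows "openin (Mtop A) (Hsub A b)"
proof -
  have "openin (topology_generated_by {Hsub A b | b. b \<in> A}) (Hsub A b)"
    by (rule topology_generated_by_Basis) (use assms in auto)
  then show ?thesis
    unfolding Mtop_def openin_subtopology by (auto simp: Hsub_def)
qed

lemma continuous_map_place_comp:
  assumes K: "is_subfield K" and L: "is_subfield L" and PX: "is_place L K \<xi>"
  shows "continuous_map (Mtop K) (Mtop L) (\<lambda>\<zeta>. place_comp \<zeta> \<xi>)"
proof -
  let ?\<iota> = "\<lambda>\<zeta>. place_comp \<zeta> \<xi>"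
  have maps: "?\<iota> \<zeta> \<in> Mspace L" if "\<zeta> \<in> Mspace K" for \<zeta>
    using is_place_place_comp[OF L K PX] that unfolding Mspace_def by blast
  have "continuous_map (Mtop K) (topology_generated_by {Hsub L b | b. b \<in> L}) ?\<iota>"
  proof (rule continuous_on_generated_topo)
    fix U assume "U \<in> {Hsub L b | b. b \<in> L}"
    then obtain b where b: "b \<in> L" and U: "U = Hsub L b" by auto
    show "openin (Mtop K) (?\<iota> -` U \<inter> topspace (Mtop K))"
    proof (cases "\<xi> b")
      case None
      then have "?\<iota> -` U \<inter> topspace (Mtop K) = {}"
        by (auto simp: U Hsub_def place_comp_def)
      then show ?thesis by simp
    next
      case (Some c)
      have "?\<iota> -` U \<inter> topspace (Mtop K) = Hsub K c"
        using maps by (auto simp: topspace_Mtop[OF K] U Hsub_def place_comp_def Some)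
      then show ?thesis
        using openin_Mtop_Hsub is_place_val[OF PX b Some] by simp
    qed
  next
    show "?\<iota> ` topspace (Mtop K) \<subseteq> \<Union> {Hsub L b | b. b \<in> L}"
      using maps topspace_Mtop[OF K] Union_Hsub[OF L] by auto
  qed
  then show ?thesis
    unfolding Mtop_def[of L]
    by (rule continuous_map_into_subtopology) (use maps topspace_Mtop[OF K] in auto)
qed

theorem theorem9p1:
  fixes K L :: "'a::field set" and \<xi> :: "'a \<Rightarrow> 'a option"
  assumes "is_subfield K" and "is_subfield L" and "K \<subseteq> L"
    and "K_rational_place K L \<xi>"
  defines "\<iota> \<equiv> (\<lambda>\<zeta>. place_comp \<zeta> \<xi>)"
  shows "continuous_map (Mtop K) (Mtop L) \<iota> \<and> inj_on \<iota> (Mspace K) \<and>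
         (\<forall>\<zeta>\<in>Mspace K. place_restrict K (\<iota> \<zeta>) = \<zeta>)"
proof -
  have PX: "is_place L K \<xi>" using assms(4) unfolding K_rational_place_def by blast
  have restr: "\<forall>\<zeta>\<in>Mspace K. place_restrict K (\<iota> \<zeta>) = \<zeta>"
    using place_restrict_place_comp_rational[OF assms(4)] unfolding Mspace_def \<iota>_def by blast
  then have "inj_on \<iota> (Mspace K)" by (metis inj_onI)
  moreover have "continuous_map (Mtop K) (Mtop L) \<iota>"
    unfolding \<iota>_def using continuous_map_place_comp[OF assms(1,2) PX] .
  ultimately show ?thesis using restr by blast
qed

end
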